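(* There exists no structure $\mathbf{E}=(\{0,1\},\mathcal R)$ (a structure with universe $\{0,1\}$ in some countable first-order language) such that $(\mathbf{S}_0,\mathbf{E})$ is a dual pair.
   Context: $\mathbf{S}_0=(\{0,1\},\beta)$ where $\beta$ is the ternary relation with $\beta(x,y,z)$ iff ($x=z=1\implies y=1$). A structure is $\mathbf{D}$-separated if it embeds (injective homomorphism preserving and reflecting all relations) into a power of $\mathbf{D}$. Semi-dual pair: for finite models $\mathbf{D}$, $\mathbf{E}$ of countable languages $\mathcal L,\mathcal R$ with the same universe, $(\mathbf{D},\mathbf{E})$ is a semi-dual pair if for every finite $\mathbf{D}$-separated $\mathbf{X}$ with universe $X$: (S1) the set $\hom(\mathbf{X},\mathbf{D})$ of homomorphisms is a substructure of $\mathbf{E}^X$; (S2) for every homomorphism $\phi$ from $\hom(\mathbf{X},\mathbf{D})$ (with the $\mathcal R$-structure induced from $\mathbf{E}^X$) into $\mathbf{E}$ there is $x\in X$ with $\phi(f)=f(x)$ for all $f\in\hom(\mathbf{X},\mathbf{D})$. $(\mathbf{D},\mathbf{E})$ is a dual pair if both $(\mathbf{D},\mathbf{E})$ and $(\mathbf{E},\mathbf{D})$ are semi-dual pairs. *)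

theory Defs
  imports "HOL-Library.FuncSet"
begin

text \<open>A first-order language: relation symbols and function symbols (both drawn
from nat, so every language is countable), with arities.\<close>
record lang =
  rsyms :: "nat set"
  rar   :: "nat \<Rightarrow> nat"
  fsyms :: "nat set"
  far   :: "nat \<Rightarrow> nat"

record 'a struct =
  carrier :: "'a set"
  rels    :: "nat \<Rightarrow> 'a list \<Rightarrow> bool"
  funs    :: "nat \<Rightarrow> 'a list \<Rightarrow> 'a"

definition is_struct :: "lang \<Rightarrow> 'a struct \<Rightarrow> bool" where
  "is_struct L A \<longleftrightarrow> carrier A \<noteq> {} \<and>
     (\<forall>f\<in>fsyms L. \<forall>xs. length xs = far L f \<and> set xs \<subseteq> carrier A \<longrightarrow> funs A f xs \<in> carrier A)"

definition is_hom :: "lang \<Rightarrow> 'a struct \<Rightarrow> 'b struct \<Rightarrow> ('a \<Rightarrow> 'b) \<Rightarrow> bool" where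
  "is_hom L A B h \<longleftrightarrow> h \<in> carrier A \<rightarrow> carrier B \<and>
     (\<forall>r\<in>rsyms L. \<forall>xs. length xs = rar L r \<and> set xs \<subseteq> carrier A \<and> rels A r xs
          \<longrightarrow> rels B r (map h xs)) \<and>
     (\<forall>f\<in>fsyms L. \<forall>xs. length xs = far L f \<and> set xs \<subseteq> carrier A
          \<longrightarrow> h (funs A f xs) = funs B f (map h xs))"

definition is_embedding :: "lang \<Rightarrow> 'a struct \<Rightarrow> 'b struct \<Rightarrow> ('a \<Rightarrow> 'b) \<Rightarrow> bool" where
  "is_embedding L A B h \<longleftrightarrow> is_hom L A B h \<and> inj_on h (carrier A) \<and>
     (\<forall>r\<in>rsyms L. \<forall>xs. length xs = rar L r \<and> set xs \<subseteq> carrier A \<and> rels B r (map h xs)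
          \<longrightarrow> rels A r xs)"

definition power :: "'a struct \<Rightarrow> 'i set \<Rightarrow> ('i \<Rightarrow> 'a) struct" where
  "power B I = \<lparr> carrier = I \<rightarrow>\<^sub>E carrier B,
      rels = (\<lambda>r fs. \<forall>i\<in>I. rels B r (map (\<lambda>g. g i) fs)),
      funs = (\<lambda>f fs. restrict (\<lambda>i. funs B f (map (\<lambda>g. g i) fs)) I) \<rparr>"

definition homs :: "lang \<Rightarrow> 'a struct \<Rightarrow> 'b struct \<Rightarrow> ('a \<Rightarrow> 'b) set" where
  "homs L X D = {h \<in> carrier X \<rightarrow>\<^sub>E carrier D. is_hom L X D h}"

definition substructure :: "lang \<Rightarrow> 'a struct \<Rightarrow> 'a set \<Rightarrow> bool" where
  "substructure L A S \<longleftrightarrow> S \<subseteq> carrier A \<and>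
     (\<forall>f\<in>fsyms L. \<forall>xs. length xs = far L f \<and> set xs \<subseteq> S \<longrightarrow> funs A f xs \<in> S)"

definition induced :: "'a struct \<Rightarrow> 'a set \<Rightarrow> 'a struct" where
  "induced A S = A\<lparr> carrier := S \<rparr>"

text \<open>D-separated: embeds into some power of D (index sets in nat suffice for finite X).\<close>
definition separated :: "lang \<Rightarrow> 'a struct \<Rightarrow> 'b struct \<Rightarrow> bool" where
  "separated L D X \<longleftrightarrow> (\<exists>(I::nat set) h. is_embedding L X (power D I) h)"

text \<open>Semi-dual pair; finite D-separated structures X are taken with universe a
(finite) subset of nat, which covers all of them up to isomorphism.\<close>
definition semi_dual_pair :: "lang \<Rightarrow> 'a struct \<Rightarrow> lang \<Rightarrow> 'a struct \<Rightarrow> bool" where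
  "semi_dual_pair L D R E \<longleftrightarrow>
     (\<forall>X :: nat struct. is_struct L X \<and> finite (carrier X) \<and> separated L D X \<longrightarrow>
        substructure R (power E (carrier X)) (homs L X D) \<and>
        (\<forall>\<phi>. is_hom R (induced (power E (carrier X)) (homs L X D)) E \<phi> \<longrightarrow>
              (\<exists>x\<in>carrier X. \<forall>f\<in>homs L X D. \<phi> f = f x)))"

definition dual_pair :: "lang \<Rightarrow> 'a struct \<Rightarrow> lang \<Rightarrow> 'a struct \<Rightarrow> bool" where
  "dual_pair L D R E \<longleftrightarrow> semi_dual_pair L D R E \<and> semi_dual_pair R E L D"

definition L0 :: lang where
  "L0 = \<lparr> rsyms = {0}, rar = (\<lambda>_. 3), fsyms = {}, far = (\<lambda>_. 0) \<rparr>"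

definition S0 :: "nat struct" where
  "S0 = \<lparr> carrier = {0, 1},
      rels = (\<lambda>r xs. case xs of [x, y, z] \<Rightarrow> (x = 1 \<and> z = 1 \<longrightarrow> y = 1) | _ \<Rightarrow> False),
      funs = (\<lambda>_ _. 0) \<rparr>"

end

theory Submission
  imports Defs
begin

text \<open>Suppose \<open>(S0, E)\<close> and \<open>(E, S0)\<close> are semi-dual pairs. Let \<open>X5\<close> be the five-point structure whose
  homomorphisms into \<open>S0\<close> are the maps \<open>g\<close> with \<open>\<beta>(g0, g4, g1)\<close> and \<open>\<beta>(g4, g3, g2)\<close>. By (S1) they
  form a substructure of \<open>E\<^sup>5\<close>, so their restrictions to the first four coordinates, which are
  all vectors of \<open>{0,1}\<^sup>4\<close> except \<open>1110\<close>, form an \<open>E\<close>-separated structure \<open>Y\<close>. Every homomorphism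
  \<open>Y \<rightarrow> E\<close> composed with restriction is, by (S2), an evaluation at a point of \<open>X5\<close>; it cannot be
  the fifth point, so the homomorphisms \<open>Y \<rightarrow> E\<close> are the four coordinate projections. Sending the
  last projection to 0 and the others to 1 preserves \<open>\<beta>\<close>, because any violating triple is refuted
  by a vector of \<open>Y\<close> with last coordinate 0. By (S2) for \<open>(E, S0)\<close> this map would be the
  evaluation at a vector of \<open>Y\<close> with coordinates \<open>1110\<close>, which does not exist.\<close>

lemma power_simps [simp]:
  "carrier (power B I) = I \<rightarrow>\<^sub>E carrier B"
  "rels (power B I) r gs \<longleftrightarrow> (\<forall>i\<in>I. rels B r (map (\<lambda>g. g i) gs))"
  "funs (power B I) f gs = (\<lambda>i\<in>I. funs B f (map (\<lambda>g. g i) gs))"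
  by (simp_all add: power_def)

lemma induced_simps [simp]:
  "carrier (induced A S) = S" "rels (induced A S) = rels A" "funs (induced A S) = funs A"
  by (simp_all add: induced_def)

lemma is_hom_comp:
  assumes g: "is_hom L A B g" and h: "is_hom L B C h"
  shows "is_hom L A C (h \<circ> g)"
  unfolding is_hom_def
proof (intro conjI ballI allI impI)
  show "h \<circ> g \<in> carrier A \<rightarrow> carrier C" using g h by (auto simp: is_hom_def)
next
  fix r xs assume r: "r \<in> rsyms L" and xs: "length xs = rar L r \<and> set xs \<subseteq> carrier A \<and> rels A r xs"
  then have "rels B r (map g xs)" "set (map g xs) \<subseteq> carrier B"
    using g by (auto simp: is_hom_def)
  moreover have "rels B r ys \<Longrightarrow> set ys \<subseteq> carrier B \<Longrightarrow> length ys = rar L r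
      \<Longrightarrow> rels C r (map h ys)" for ys
    using h r by (simp add: is_hom_def)
  ultimately show "rels C r (map (h \<circ> g) xs)" using xs by (metis length_map map_map set_map)
next
  fix f xs assume f: "f \<in> fsyms L" and xs: "length xs = far L f \<and> set xs \<subseteq> carrier A"
  then have "g (funs A f xs) = funs B f (map g xs)" "set (map g xs) \<subseteq> carrier B"
    using g by (auto simp: is_hom_def)
  moreover have "set ys \<subseteq> carrier B \<Longrightarrow> length ys = far L f \<Longrightarrow> h (funs B f ys) = funs C f (map h ys)"
    for ys
    using h f by (simp add: is_hom_def)
  ultimately show "(h \<circ> g) (funs A f xs) = funs C f (map (h \<circ> g) xs)"
    using xs by (metis comp_apply length_map map_map)
qed

lemma is_hom_induced:
  "S \<subseteq> carrier A \<Longrightarrow> is_hom L A B h \<Longrightarrow> is_hom L (induced A S) B h"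
  unfolding is_hom_def by auto

lemma restrict_in_homs:
  assumes "is_struct L A" and "is_hom L A B h"
  shows "restrict h (carrier A) \<in> homs L A B"
proof -
  have eq: "map (restrict h (carrier A)) xs = map h xs" if "set xs \<subseteq> carrier A" for xs
    using that by (auto intro: map_cong)
  from assms show ?thesis
    unfolding homs_def is_hom_def is_struct_def by (auto simp: eq)
qed

lemma power_projection_hom:
  "i \<in> I \<Longrightarrow> is_hom L (power B I) B (\<lambda>g. g i)"
  unfolding is_hom_def by auto

lemma power_restriction_hom:
  assumes "J \<subseteq> I"
  shows "is_hom L (power B I) (power B J) (\<lambda>g. restrict g J)"
proof -
  have coord: "(\<lambda>g. g j) \<circ> (\<lambda>g. restrict g J) = (\<lambda>g. g j)" if "j \<in> J" for j
    using that by auto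
  from assms show ?thesis
    unfolding is_hom_def by (auto intro!: restrict_ext simp: coord Int_absorb1)
qed

lemma substructure_hom_image:
  assumes h: "is_hom L A B h" and S: "substructure L A S"
  shows "substructure L B (h ` S)"
  unfolding substructure_def
proof (intro conjI ballI allI impI)
  show "h ` S \<subseteq> carrier B" using h S by (auto simp: is_hom_def substructure_def)
next
  fix f xs assume f: "f \<in> fsyms L" and xs: "length xs = far L f \<and> set xs \<subseteq> h ` S"
  then have "xs \<in> lists (h ` S)" by auto
  then obtain ys where ys: "ys \<in> lists S" "xs = map h ys"
    unfolding lists_image by blast
  have "length ys = far L f" "set ys \<subseteq> carrier A"
    using xs ys S by (auto simp: substructure_def)
  then have "funs B f xs = h (funs A f ys)"
    using h f unfolding is_hom_def ys(2) by (simp del: set_map)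
  also have "\<dots> \<in> h ` S"
    using f ys(1) \<open>length ys = far L f\<close> S unfolding substructure_def by blast
  finally show "funs B f xs \<in> h ` S" .
qed

section \<open>Structures on subsets of \<open>nat\<close>\<close>

text \<open>The substructure \<open>e ` C\<close> of \<open>B\<^sup>I\<close> carried over to \<open>C\<close>; needed because the semi-dual pair
  conditions only speak about structures on subsets of \<open>nat\<close>.\<close>

definition pullback :: "'a struct \<Rightarrow> 'i set \<Rightarrow> 'c set \<Rightarrow> ('c \<Rightarrow> 'i \<Rightarrow> 'a) \<Rightarrow> 'c struct" where
  "pullback B I C e = \<lparr>carrier = C, rels = (\<lambda>r xs. rels (power B I) r (map e xs)),
      funs = (\<lambda>f xs. the_inv_into C e (funs (power B I) f (map e xs)))\<rparr>"

lemma pullback_simps: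
  "carrier (pullback B I C e) = C"
  "rels (pullback B I C e) r xs = rels (power B I) r (map e xs)"
  "funs (pullback B I C e) f xs = the_inv_into C e (funs (power B I) f (map e xs))"
  by (simp_all add: pullback_def del: power_simps)

context
  fixes L :: lang and B :: "'a struct" and I :: "'i set" and C :: "'c set" and e :: "'c \<Rightarrow> 'i \<Rightarrow> 'a"
  assumes inj: "inj_on e C" and closed: "substructure L (power B I) (e ` C)"
begin

lemma pullback_funs:
  assumes "f \<in> fsyms L" "length xs = far L f" "set xs \<subseteq> C"
  shows "funs (pullback B I C e) f xs \<in> C"
    and "e (funs (pullback B I C e) f xs) = funs (power B I) f (map e xs)"
proof -
  have "set (map e xs) \<subseteq> e ` C" using assms(3) by auto
  then have "funs (power B I) f (map e xs) \<in> e ` C"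
    using closed assms(1,2) unfolding substructure_def by (metis length_map)
  then show "funs (pullback B I C e) f xs \<in> C"
    and "e (funs (pullback B I C e) f xs) = funs (power B I) f (map e xs)"
    using inj by (simp_all add: pullback_def the_inv_into_into f_the_inv_into_f)
qed

lemma is_struct_pullback: "C \<noteq> {} \<Longrightarrow> is_struct L (pullback B I C e)"
  using pullback_funs(1) by (auto simp: is_struct_def pullback_def)

lemma pullback_embedding: "is_embedding L (pullback B I C e) (power B I) e"
  unfolding is_embedding_def is_hom_def
proof (intro conjI ballI allI impI)
  show "e \<in> carrier (pullback B I C e) \<rightarrow> carrier (power B I)"
    using closed unfolding substructure_def pullback_simps by blast
  show "inj_on e (carrier (pullback B I C e))"
    using inj by (simp add: pullback_simps)
next
  fix r xs assume "r \<in> rsyms L" and "length xs = rar L r \<and> set xs \<subseteq> carrier (pullback B I C e)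
      \<and> rels (pullback B I C e) r xs"
  then show "rels (power B I) r (map e xs)" by (simp only: pullback_simps)
next
  fix r xs assume "r \<in> rsyms L" and "length xs = rar L r \<and> set xs \<subseteq> carrier (pullback B I C e)
      \<and> rels (power B I) r (map e xs)"
  then show "rels (pullback B I C e) r xs" by (simp only: pullback_simps)
next
  fix f xs assume "f \<in> fsyms L" and "length xs = far L f \<and> set xs \<subseteq> carrier (pullback B I C e)"
  then show "e (funs (pullback B I C e) f xs) = funs (power B I) f (map e xs)"
    by (simp add: pullback_funs(2) pullback_simps(1) del: power_simps)
qed

lemma pullback_coordinate_in_homs:
  assumes "C \<noteq> {}" and "i \<in> I"
  shows "(\<lambda>c\<in>C. e c i) \<in> homs L (pullback B I C e) B"
proof -
  have "is_hom L (pullback B I C e) (power B I) e"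
    using pullback_embedding unfolding is_embedding_def by (rule conjunct1)
  then have "is_hom L (pullback B I C e) B ((\<lambda>g. g i) \<circ> e)"
    by (rule is_hom_comp[OF _ power_projection_hom[OF assms(2)]])
  from restrict_in_homs[OF is_struct_pullback[OF assms(1)] this] show ?thesis
    by (simp add: pullback_simps comp_def)
qed

lemma hom_into_pullback:
  assumes hom: "is_hom L A (power B I) \<phi>" and image: "\<phi> ` carrier A \<subseteq> e ` C"
  shows "is_hom L A (pullback B I C e) (the_inv_into C e \<circ> \<phi>)"
proof -
  have e_map: "map e (map (the_inv_into C e \<circ> \<phi>) xs) = map \<phi> xs" if "set xs \<subseteq> carrier A" for xs
    using that image inj by (auto intro!: map_idI f_the_inv_into_f)
  show ?thesis
    unfolding is_hom_def
  proof (intro conjI ballI allI impI)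
    show "the_inv_into C e \<circ> \<phi> \<in> carrier A \<rightarrow> carrier (pullback B I C e)"
      unfolding Pi_iff pullback_simps comp_apply using image by (blast intro: the_inv_into_into[OF inj])
    fix r xs assume "r \<in> rsyms L" and xs: "length xs = rar L r \<and> set xs \<subseteq> carrier A \<and> rels A r xs"
    then have "rels (power B I) r (map \<phi> xs)"
      using hom unfolding is_hom_def by (metis length_map)
    then show "rels (pullback B I C e) r (map (the_inv_into C e \<circ> \<phi>) xs)"
      using xs by (simp only: pullback_simps e_map)
  next
    fix f xs assume "f \<in> fsyms L" and xs: "length xs = far L f \<and> set xs \<subseteq> carrier A"
    then have "\<phi> (funs A f xs) = funs (power B I) f (map \<phi> xs)"
      using hom unfolding is_hom_def by blast
    then show "(the_inv_into C e \<circ> \<phi>) (funs A f xs)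
        = funs (pullback B I C e) f (map (the_inv_into C e \<circ> \<phi>) xs)"
      using xs by (simp only: pullback_simps e_map comp_apply)
  qed
qed

end

lemma separated_pullback:
  fixes I :: "nat set"
  assumes "inj_on e C" and "substructure L (power B I) (e ` C)"
  shows "separated L B (pullback B I C e)"
  using pullback_embedding[OF assms] by (auto simp: separated_def)

lemma semi_dual_pair_homs_substructure:
  fixes X :: "nat struct"
  assumes "semi_dual_pair L D R E" "is_struct L X" "finite (carrier X)" "separated L D X"
  shows "substructure R (power E (carrier X)) (homs L X D)"
  using assms by (simp add: semi_dual_pair_def)

lemma semi_dual_pair_hom_is_evaluation:
  fixes X :: "nat struct"
  assumes "semi_dual_pair L D R E" "is_struct L X" "finite (carrier X)" "separated L D X"
    and "is_hom R (induced (power E (carrier X)) (homs L X D)) E \<phi>"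
  shows "\<exists>x\<in>carrier X. \<forall>f\<in>homs L X D. \<phi> f = f x"
  using assms unfolding semi_dual_pair_def by blast

section \<open>Binary encoding of 0-1 vectors\<close>

definition bitval :: "nat \<Rightarrow> nat \<Rightarrow> nat" where
  "bitval n j = of_bool (bit n j)"

definition bits_encode :: "nat \<Rightarrow> (nat \<Rightarrow> nat) \<Rightarrow> nat" where
  "bits_encode k v = horner_sum of_bool 2 (map (\<lambda>j. v j = 1) [0..<k])"

lemma bit_bits_encode: "bit (bits_encode k v) j \<longleftrightarrow> j < k \<and> v j = 1"
  by (auto simp: bits_encode_def bit_horner_sum_bit_iff)

lemma bitval_bits_encode: "v j \<in> {0, 1} \<Longrightarrow> j < k \<Longrightarrow> bitval (bits_encode k v) j = v j"
  by (auto simp: bitval_def bit_bits_encode)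

lemma bits_encode_less: "bits_encode k v < 2 ^ k"
  using horner_sum_of_bool_2_less[of "map (\<lambda>j. v j = 1) [0..<k]"] by (simp add: bits_encode_def)

lemma bits_encode_bitval: "n < 2 ^ k \<Longrightarrow> bits_encode k (bitval n) = n"
  by (simp add: bits_encode_def bitval_def horner_sum_bit_eq_take_bit take_bit_nat_eq_self_iff)

lemma bits_encode_cong:
  assumes "\<And>j. j < k \<Longrightarrow> v j = w j"
  shows "bits_encode k v = bits_encode k w"
proof -
  have "map (\<lambda>j. v j = 1) [0..<k] = map (\<lambda>j. w j = 1) [0..<k]"
    using assms by (intro map_cong) auto
  then show ?thesis unfolding bits_encode_def by (rule arg_cong)
qed

section \<open>The five-point structure\<close>

lemma carrier_S0: "carrier S0 = {0, 1}"
  by (simp add: S0_def)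

lemma rels_S0: "rels S0 r [a, b, c] \<longleftrightarrow> (a = 1 \<and> c = 1 \<longrightarrow> b = 1)"
  by (simp add: S0_def)

definition admissible :: "(nat \<Rightarrow> nat) \<Rightarrow> bool" where
  "admissible g \<longleftrightarrow> (g 0 = 1 \<and> g 1 = 1 \<longrightarrow> g 4 = 1) \<and> (g 4 = 1 \<and> g 2 = 1 \<longrightarrow> g 3 = 1)"

definition X5_index :: "nat set" where
  "X5_index = {i. i < 2 ^ 5 \<and> admissible (bitval i)}"

definition X5_embed :: "nat \<Rightarrow> nat \<Rightarrow> nat" where
  "X5_embed x = (\<lambda>i\<in>X5_index. bitval i x)"

text \<open>\<open>X5\<close> is the structure on \<open>{0, \<dots>, 4}\<close> generated by the \<open>\<beta>\<close>-tuples \<open>(0, 4, 1)\<close> and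
  \<open>(4, 3, 2)\<close>, embedded into \<open>S0\<close> raised to the set of its admissible assignments.\<close>

definition X5 :: "nat struct" where
  "X5 = pullback S0 X5_index {..<5} X5_embed"

lemma admissible_cong: "(\<And>x. x < 5 \<Longrightarrow> g x = g' x) \<Longrightarrow> admissible g \<longleftrightarrow> admissible g'"
  by (simp add: admissible_def)

lemma bits_encode_in_X5_index:
  assumes "\<And>x. x < 5 \<Longrightarrow> g x \<in> {0, 1}" and "admissible g"
  shows "bits_encode 5 g \<in> X5_index" and "x < 5 \<Longrightarrow> bitval (bits_encode 5 g) x = g x"
proof -
  show bits: "x < 5 \<Longrightarrow> bitval (bits_encode 5 g) x = g x" for x
    using assms(1) by (simp add: bitval_bits_encode)
  have "admissible (bitval (bits_encode 5 g))"
    using assms(2) admissible_cong[of "bitval (bits_encode 5 g)" g] bits by simp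
  then show "bits_encode 5 g \<in> X5_index"
    using bits_encode_less[of 5 g] by (simp add: X5_index_def)
qed

lemma inj_X5_embed: "inj_on X5_embed {..<5}"
proof
  fix x y assume x: "x \<in> {..<5}" and "y \<in> {..<5}" and eq: "X5_embed x = X5_embed y"
  define i where "i = bits_encode 5 (\<lambda>z. of_bool (z = x))"
  have "i \<in> X5_index" "bitval i x = 1"
    using bits_encode_in_X5_index[of "\<lambda>z. of_bool (z = x)"] x by (auto simp: i_def admissible_def)
  moreover have "bitval i y = of_bool (y = x)"
    using bits_encode_in_X5_index[of "\<lambda>z. of_bool (z = x)"] \<open>y \<in> {..<5}\<close>
    by (simp add: i_def admissible_def)
  moreover have "bitval i x = bitval i y"
    using fun_cong[OF eq, of i] \<open>i \<in> X5_index\<close> by (simp add: X5_embed_def)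
  ultimately show "x = y" by (cases "x = y") auto
qed

lemma X5_embed_closed: "substructure L0 (power S0 X5_index) (X5_embed ` {..<5})"
  by (auto simp: substructure_def L0_def X5_embed_def carrier_S0 bitval_def)

lemma X5_struct: "is_struct L0 X5" and X5_finite: "finite (carrier X5)"
  and X5_separated: "separated L0 S0 X5" and carrier_X5: "carrier X5 = {..<5}"
  using is_struct_pullback[OF inj_X5_embed X5_embed_closed] separated_pullback[OF inj_X5_embed X5_embed_closed]
  by (simp_all add: X5_def pullback_simps lessThan_empty_iff)

lemma rels_X5:
  "set xs \<subseteq> {..<5} \<Longrightarrow> rels X5 r xs \<longleftrightarrow> (\<forall>i\<in>X5_index. rels S0 r (map (bitval i) xs))"
  by (auto simp: X5_def pullback_simps X5_embed_def comp_def cong: map_cong)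

lemma homs_X5: "g \<in> homs L0 X5 S0 \<longleftrightarrow> g \<in> {..<5} \<rightarrow>\<^sub>E {0, 1} \<and> admissible g"
proof
  assume g: "g \<in> homs L0 X5 S0"
  then have hom: "rels X5 0 xs \<Longrightarrow> set xs \<subseteq> {..<5} \<Longrightarrow> length xs = 3 \<Longrightarrow> rels S0 0 (map g xs)" for xs
    by (auto simp: homs_def is_hom_def L0_def carrier_X5)
  have "rels X5 0 [0, 4, 1]" "rels X5 0 [4, 3, 2]"
    by (auto simp: rels_X5 X5_index_def admissible_def rels_S0)
  from this[THEN hom] show "g \<in> {..<5} \<rightarrow>\<^sub>E {0, 1} \<and> admissible g"
    using g by (simp add: homs_def carrier_X5 carrier_S0 rels_S0 admissible_def)
next
  assume g: "g \<in> {..<5} \<rightarrow>\<^sub>E {0, 1} \<and> admissible g"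
  define i where "i = bits_encode 5 g"
  have "i \<in> X5_index" "\<And>x. x < 5 \<Longrightarrow> bitval i x = g x"
    using bits_encode_in_X5_index[of g] g by (auto simp: i_def)
  then have "g = (\<lambda>x\<in>{..<5}. X5_embed x i)"
    using g by (auto simp: X5_embed_def PiE_iff extensional_def)
  moreover have "(\<lambda>x\<in>{..<5}. X5_embed x i) \<in> homs L0 X5 S0"
    unfolding X5_def
    by (rule pullback_coordinate_in_homs[OF inj_X5_embed X5_embed_closed _ \<open>i \<in> X5_index\<close>]) (simp add: lessThan_empty_iff)
  ultimately show "g \<in> homs L0 X5 S0" by simp
qed

section \<open>The structure of restrictions to four coordinates\<close>

definition Y_carrier :: "nat set" where
  "Y_carrier = {n. n < 2 ^ 4 \<and> (bitval n 0 = 1 \<and> bitval n 1 = 1 \<and> bitval n 2 = 1 \<longrightarrow> bitval n 3 = 1)}"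

definition Y_embed :: "nat \<Rightarrow> nat \<Rightarrow> nat" where
  "Y_embed n = (\<lambda>j\<in>{..<4}. bitval n j)"

definition Y :: "nat struct \<Rightarrow> nat struct" where
  "Y E = pullback E {..<4} Y_carrier Y_embed"

definition Y_coordinate :: "nat \<Rightarrow> nat \<Rightarrow> nat" where
  "Y_coordinate j = (\<lambda>n\<in>Y_carrier. bitval n j)"

definition admissible_lift :: "nat \<Rightarrow> nat \<Rightarrow> nat" where
  "admissible_lift n = (\<lambda>x\<in>{..<5}. if x < 4 then bitval n x else bitval n 0 * bitval n 1)"

lemma zero_in_Y_carrier: "0 \<in> Y_carrier"
  by (simp add: Y_carrier_def bitval_def)

lemma inj_Y_embed: "inj_on Y_embed Y_carrier"
proof
  fix n m assume "n \<in> Y_carrier" "m \<in> Y_carrier" and eq: "Y_embed n = Y_embed m"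
  have "bitval n j = bitval m j" if "j < 4" for j
    using fun_cong[OF eq, of j] that by (simp add: Y_embed_def)
  then have "bits_encode 4 (bitval n) = bits_encode 4 (bitval m)"
    by (rule bits_encode_cong)
  with \<open>n \<in> Y_carrier\<close> \<open>m \<in> Y_carrier\<close> show "n = m"
    by (simp add: Y_carrier_def bits_encode_bitval)
qed

lemma admissible_lift_in_homs_X5: "n \<in> Y_carrier \<Longrightarrow> admissible_lift n \<in> homs L0 X5 S0"
  by (auto simp: homs_X5 admissible_lift_def admissible_def Y_carrier_def bitval_def)

lemma restrict_admissible_lift: "restrict (admissible_lift n) {..<4} = Y_embed n"
  by (auto simp: admissible_lift_def Y_embed_def)

lemma restrictions_of_homs_X5:
  "(\<lambda>g. restrict g {..<4}) ` homs L0 X5 S0 = Y_embed ` Y_carrier"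
proof
  show "Y_embed ` Y_carrier \<subseteq> (\<lambda>g. restrict g {..<4}) ` homs L0 X5 S0"
  proof (rule image_subsetI)
    fix n assume n: "n \<in> Y_carrier"
    show "Y_embed n \<in> (\<lambda>g. restrict g {..<4}) ` homs L0 X5 S0"
      by (rule image_eqI[of _ _ "admissible_lift n"])
        (simp_all add: restrict_admissible_lift admissible_lift_in_homs_X5 n)
  qed
next
  show "(\<lambda>g. restrict g {..<4}) ` homs L0 X5 S0 \<subseteq> Y_embed ` Y_carrier"
  proof (rule image_subsetI)
    fix g assume "g \<in> homs L0 X5 S0"
    then have g: "g \<in> {..<5} \<rightarrow>\<^sub>E {0, 1}" "admissible g" by (simp_all add: homs_X5)
    define n where "n = bits_encode 4 g"
    have bits: "bitval n j = g j" if "j < 4" for j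
      using PiE_mem[OF g(1), of j] that unfolding n_def by (simp add: bitval_bits_encode)
    have "n < 2 ^ 4" by (simp only: n_def bits_encode_less)
    with g(2) bits have "n \<in> Y_carrier" by (simp add: Y_carrier_def admissible_def)
    moreover have "restrict g {..<4} = Y_embed n"
      using bits by (auto simp: Y_embed_def)
    ultimately show "restrict g {..<4} \<in> Y_embed ` Y_carrier" by blast
  qed
qed

lemma carrier_Y: "carrier (Y E) = Y_carrier" and Y_finite: "finite (carrier (Y E))"
  by (simp_all add: Y_def pullback_simps Y_carrier_def)

context
  fixes R :: lang and E :: "nat struct"
  assumes dual: "semi_dual_pair L0 S0 R E"
begin

lemma homs_X5_closed: "substructure R (power E {..<5}) (homs L0 X5 S0)"
  using semi_dual_pair_homs_substructure[OF dual X5_struct X5_finite X5_separated] by (simp add: carrier_X5)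

lemma Y_embed_closed: "substructure R (power E {..<4}) (Y_embed ` Y_carrier)"
  using substructure_hom_image[OF power_restriction_hom[of "{..<4}"] homs_X5_closed]
  by (simp add: restrictions_of_homs_X5)

lemma Y_struct: "is_struct R (Y E)" and Y_separated: "separated R E (Y E)"
proof -
  have "Y_carrier \<noteq> {}" using zero_in_Y_carrier by blast
  then show "is_struct R (Y E)" "separated R E (Y E)"
    using is_struct_pullback[OF inj_Y_embed Y_embed_closed] separated_pullback[OF inj_Y_embed Y_embed_closed]
    by (auto simp: Y_def)
qed

lemma restriction_to_Y_hom:
  "is_hom R (induced (power E {..<5}) (homs L0 X5 S0)) (Y E)
     (the_inv_into Y_carrier Y_embed \<circ> (\<lambda>g. restrict g {..<4}))"
proof -
  have "homs L0 X5 S0 \<subseteq> carrier (power E {..<5})"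
    using homs_X5_closed by (simp add: substructure_def del: power_simps)
  then show ?thesis
    unfolding Y_def
    by (rule hom_into_pullback[OF inj_Y_embed Y_embed_closed is_hom_induced[OF _ power_restriction_hom]])
      (auto simp: restrictions_of_homs_X5)
qed

lemma hom_Y_is_coordinate:
  assumes h: "h \<in> homs R (Y E) E"
  shows "\<exists>j<4. h = Y_coordinate j"
proof -
  define \<rho> where "\<rho> = the_inv_into Y_carrier Y_embed \<circ> (\<lambda>g. restrict g {..<4})"
  have "is_hom R (Y E) E h" using h by (simp add: homs_def)
  then have "is_hom R (induced (power E {..<5}) (homs L0 X5 S0)) E (h \<circ> \<rho>)"
    unfolding \<rho>_def by (rule is_hom_comp[OF restriction_to_Y_hom])
  with semi_dual_pair_hom_is_evaluation[OF dual X5_struct X5_finite X5_separated]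
  obtain x where "x < 5" and ev: "\<And>g. g \<in> homs L0 X5 S0 \<Longrightarrow> h (\<rho> g) = g x"
    unfolding carrier_X5 by fastforce
  have \<rho>_lift: "\<rho> (admissible_lift n) = n" if "n \<in> Y_carrier" for n
    using that by (simp add: \<rho>_def restrict_admissible_lift the_inv_into_f_f[OF inj_Y_embed])
  have "x \<noteq> 4"
  proof
    assume "x = 4"
    \<comment> \<open>but the fifth coordinate of an admissible map is not determined by the first four\<close>
    define g :: "nat \<Rightarrow> nat" where "g = (\<lambda>z\<in>{..<5}. of_bool (z = 4))"
    have "g \<in> homs L0 X5 S0"
      by (simp add: homs_X5 g_def restrict_PiE_iff admissible_def)
    moreover note zero_in_Y_carrier
    moreover have "restrict g {..<4} = restrict (admissible_lift 0) {..<4}"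
      by (auto simp: g_def admissible_lift_def bitval_def)
    ultimately have "g 4 = admissible_lift 0 4"
      using ev[of g] ev[OF admissible_lift_in_homs_X5] \<open>x = 4\<close> by (simp add: \<rho>_def)
    then show False by (simp add: g_def admissible_lift_def bitval_def)
  qed
  have "h n = Y_coordinate x n" for n
  proof (cases "n \<in> Y_carrier")
    case True
    then have "h n = admissible_lift n x"
      using ev[OF admissible_lift_in_homs_X5] \<rho>_lift by metis
    then show ?thesis using True \<open>x < 5\<close> \<open>x \<noteq> 4\<close> by (simp add: admissible_lift_def Y_coordinate_def)
  next
    case False
    then show ?thesis using h by (simp add: homs_def carrier_Y Y_coordinate_def PiE_def extensional_def)
  qed
  then show ?thesis using \<open>x < 5\<close> \<open>x \<noteq> 4\<close> by (intro exI[of _ x]) auto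
qed

lemma homs_Y: "homs R (Y E) E = Y_coordinate ` {..<4}"
proof
  show "homs R (Y E) E \<subseteq> Y_coordinate ` {..<4}"
    using hom_Y_is_coordinate by blast
  have "Y_coordinate j \<in> homs R (Y E) E" if "j < 4" for j
  proof -
    have "(\<lambda>n\<in>Y_carrier. Y_embed n j) = Y_coordinate j"
      using that by (auto simp: Y_embed_def Y_coordinate_def)
    moreover have "Y_carrier \<noteq> {}" using zero_in_Y_carrier by blast
    ultimately show ?thesis
      using pullback_coordinate_in_homs[OF inj_Y_embed Y_embed_closed, of j] that by (simp add: Y_def)
  qed
  then show "Y_coordinate ` {..<4} \<subseteq> homs R (Y E) E" by auto
qed

end

section \<open>The missing point\<close>

lemma Y_witness:
  assumes "a < 3" and "b < 3"
  shows "\<exists>n\<in>Y_carrier. bitval n a = 1 \<and> bitval n b = 1 \<and> bitval n 3 = 0"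
proof -
  define n where "n = bits_encode 4 (\<lambda>j. of_bool (j = a \<or> j = b))"
  have bits: "bitval n j = of_bool (j = a \<or> j = b)" if "j < 4" for j
    using that by (simp add: n_def bitval_bits_encode)
  have "n < 2 ^ 4" by (simp only: n_def bits_encode_less)
  then have "n \<in> Y_carrier"
    using assms bits[of 0] bits[of 1] bits[of 2] bits[of 3] by (auto simp: Y_carrier_def)
  moreover have "bitval n a = 1" "bitval n b = 1" "bitval n 3 = 0"
    using assms bits by auto
  ultimately show ?thesis by blast
qed

lemma Y_coordinate_neq_3:
  assumes "j < 3"
  shows "Y_coordinate j \<noteq> Y_coordinate 3"
proof
  assume eq: "Y_coordinate j = Y_coordinate 3"
  obtain n where "n \<in> Y_carrier" "bitval n j = 1" "bitval n 3 = 0"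
    using Y_witness[OF assms assms] by blast
  with fun_cong[OF eq, of n] show False by (simp add: Y_coordinate_def)
qed

text \<open>If \<open>(E, S0)\<close> were a semi-dual pair, this would be the evaluation at the vector \<open>1110\<close>,
  which is exactly the one missing from \<open>Y_carrier\<close>.\<close>

definition missing_point :: "(nat \<Rightarrow> nat) \<Rightarrow> nat" where
  "missing_point h = (if h = Y_coordinate 3 then 0 else 1)"

lemma missing_point_hom:
  "is_hom L0 (induced (power S0 Y_carrier) (Y_coordinate ` {..<4})) S0 missing_point"
  (is "is_hom L0 ?H S0 missing_point")
  unfolding is_hom_def
proof (intro conjI ballI allI impI)
  show "missing_point \<in> carrier ?H \<rightarrow> carrier S0"
    by (simp add: missing_point_def carrier_S0)
next
  fix f xs assume "f \<in> fsyms L0"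
  then show "missing_point (funs ?H f xs) = funs S0 f (map missing_point xs)"
    by (simp add: L0_def)
next
  fix r xs assume "r \<in> rsyms L0" and xs: "length xs = rar L0 r \<and> set xs \<subseteq> carrier ?H \<and> rels ?H r xs"
  then obtain a b c where abc: "xs = [Y_coordinate a, Y_coordinate b, Y_coordinate c]" "a < 4" "c < 4"
    by (auto simp: L0_def numeral_3_eq_3 length_Suc_conv)
  have rel: "rels S0 r [bitval n a, bitval n b, bitval n c]" if "n \<in> Y_carrier" for n
    using xs that by (simp add: abc Y_coordinate_def)
  show "rels S0 r (map missing_point xs)"
  proof (rule ccontr)
    assume "\<not> rels S0 r (map missing_point xs)"
    then have b3: "Y_coordinate b = Y_coordinate 3" and "a \<noteq> 3" "c \<noteq> 3"
      by (auto simp: abc rels_S0 missing_point_def split: if_splits)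
    with abc have "a < 3" "c < 3" by auto
    then obtain n where "n \<in> Y_carrier" "bitval n a = 1" "bitval n c = 1" "bitval n 3 = 0"
      using Y_witness by blast
    with rel[of n] fun_cong[OF b3, of n] show False
      by (simp add: rels_S0 Y_coordinate_def)
  qed
qed

lemma missing_point_not_evaluation:
  assumes "n \<in> Y_carrier"
  shows "\<exists>h\<in>Y_coordinate ` {..<4}. missing_point h \<noteq> h n"
proof (rule ccontr)
  assume "\<not> ?thesis"
  then have at_n: "missing_point (Y_coordinate j) = bitval n j" if "j < 4" for j
    using that assms by (auto simp: Y_coordinate_def)
  have "bitval n j = 1" if "j < 3" for j
    using at_n[of j] Y_coordinate_neq_3[OF that] that by (simp add: missing_point_def)
  moreover have "bitval n 3 = 0"
    using at_n[of 3] by (simp add: missing_point_def)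
  ultimately show False
    using assms by (simp add: Y_carrier_def)
qed

theorem mainTheorem17:
  shows "\<not> (\<exists>(R::lang) (E::nat struct).
             is_struct R E \<and> carrier E = {0, 1} \<and> dual_pair L0 S0 R E)"
proof
  assume "\<exists>(R::lang) (E::nat struct). is_struct R E \<and> carrier E = {0, 1} \<and> dual_pair L0 S0 R E"
  then obtain R :: lang and E :: "nat struct"
    where dual: "semi_dual_pair L0 S0 R E" and dual': "semi_dual_pair R E L0 S0"
    by (auto simp: dual_pair_def)
  have "is_hom L0 (induced (power S0 (carrier (Y E))) (homs R (Y E) E)) S0 missing_point"
    using missing_point_hom by (simp add: carrier_Y homs_Y[OF dual])
  then obtain n where "n \<in> Y_carrier" and "\<forall>h\<in>Y_coordinate ` {..<4}. missing_point h = h n"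
    using semi_dual_pair_hom_is_evaluation[OF dual' Y_struct[OF dual] Y_finite Y_separated[OF dual]]
    by (auto simp: carrier_Y homs_Y[OF dual])
  with missing_point_not_evaluation show False by blast
qed

end
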